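(* Consider any run of Algorithm 1 (described in the context). Whenever step (5) is executed with current set $S$ and current point $\bar x$, the inequality $$\sum_{i=1}^{k} d^k_ic^ix\ \ge\ \sum_{i=1}^{k-1}d^k_ic^i\bar x+d^k_k\lceil c^k\bar x\rceil$$ added in that step is satisfied by every point of $S\cap\mathbb{Z}^n$ and is violated by $\bar x$ (i.e. it is a cutting plane). Moreover, Algorithm 1 terminates after a finite number of iterations.
   Context: A lattice basis of $\mathbb{Z}^n$ is a set of $n$ linearly independent $c^1,\dots,c^n\in\mathbb{Z}^n$ such that every $v\in\mathbb{Z}^n$ is an integer combination of them. The associated lexicographic order: $x\prec y$ iff $x\ne y$ and $c^ix<c^iy$ for the smallest $i$ with $c^ix\ne c^iy$. For nonempty compact $T\subseteq\mathbb{R}^n$, the lex-min point of $T$ is the unique $\bar x\in T$ with $\bar x\prec x$ for all $x\in T\setminus\{\bar x\}$ (minimize $c^1x$ over $T$, then $c^2x$ over the minimizers, etc.). $K=\{x: c^ix\ge0,\ i=1,\dots,n\}$. $\mathcal S$ is a family of compact (not necessarily convex or connected) subsets of $\mathbb{R}^n$ such that $S\cap H\in\mathcal S$ whenever $S\in\mathcal S$ and $H$ is a closed halfspace; an oracle solves $\min\{cx:x\in S\}$ (or certifies $S=\emptyset$) for $S\in\mathcal S$. Algorithm 1. Input: nonempty $S\in\mathcal S$, $c\in\mathbb{Z}^n\setminus\{0\}$ with relatively prime entries, and a lattice basis $c^1,\dots,c^n$ with $c^1=c$. (1) Compute $\ell_i:=\lceil\min\{c^ix:x\in S\}\rceil$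 for all $i$; replace $S$ by $S-t$ where $t\in\mathbb{Z}^n$ is the vector with $c^it=\ell_i$ for all $i$; then replace $S$ by $S\cap K$. (2) If $S=\emptyset$, stop: no integer feasible point. (3) Else compute the lex-min point $\bar x$ of $S$. (4) If $\bar x\in\mathbb{Z}^n$, return $\bar x$. (5) Else let $k$ be the smallest index with $c^k\bar x\notin\mathbb{Z}$; set $d^k_k:=1$, $d^k_{k-1}:=\lceil c^k\bar x\rceil$ (if $k\ge2$), $d^k_i:=\lceil c^k\bar x\rceil\prod_{j=i+1}^{k-1}(c^j\bar x+1)$ for $i\le k-2$; replace $S$ by $S\cap H$, where $H$ is the halfspace $\sum_{i=1}^k d^k_ic^ix\ge\sum_{i=1}^{k-1}d^k_ic^i\bar x+d^k_k\lceil c^k\bar x\rceil$; go to (2). An iteration is one pass through steps (2)–(5). *)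

theory Defs
  imports "HOL-Analysis.Analysis"
begin

text \<open>Points live in R^n with n = CARD('n). The lattice basis c^1,...,c^n is given
  as integer vectors C 1, ..., C n; cvec C i is c^i viewed as a real vector.\<close>

definition cvec :: "(nat \<Rightarrow> int^'n) \<Rightarrow> nat \<Rightarrow> real^'n" where
  "cvec C i = (\<chi> j. of_int (C i $ j))"

definition intpt :: "real^'n \<Rightarrow> bool" where
  "intpt x \<longleftrightarrow> (\<forall>j. x $ j \<in> \<int>)"

definition lattice_basis :: "(nat \<Rightarrow> int^'n) \<Rightarrow> bool" where
  "lattice_basis C \<longleftrightarrow>
     (\<forall>l::nat \<Rightarrow> real. (\<Sum>i=1..CARD('n). l i *\<^sub>R cvec C i) = 0 \<longrightarrow> (\<forall>i\<in>{1..CARD('n)}. l i = 0)) \<and>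
     (\<forall>v::int^'n. \<exists>l::nat \<Rightarrow> int. v = (\<Sum>i=1..CARD('n). l i *s C i))"

definition lexless :: "(nat \<Rightarrow> int^'n) \<Rightarrow> real^'n \<Rightarrow> real^'n \<Rightarrow> bool" where
  "lexless C x y \<longleftrightarrow> x \<noteq> y \<and>
     (\<exists>i\<in>{1..CARD('n)}. cvec C i \<bullet> x < cvec C i \<bullet> y \<and>
        (\<forall>j\<in>{1..<i}. cvec C j \<bullet> x = cvec C j \<bullet> y))"

definition lexmin :: "(nat \<Rightarrow> int^'n) \<Rightarrow> (real^'n) set \<Rightarrow> real^'n" where
  "lexmin C T = (THE xb. xb \<in> T \<and> (\<forall>x\<in>T - {xb}. lexless C xb x))"

definition Kcone :: "(nat \<Rightarrow> int^'n) \<Rightarrow> (real^'n) set" where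
  "Kcone C = {x. \<forall>i\<in>{1..CARD('n)}. cvec C i \<bullet> x \<ge> 0}"

definition init_set :: "(nat \<Rightarrow> int^'n) \<Rightarrow> (real^'n) set \<Rightarrow> (real^'n) set" where
  "init_set C S =
    (let l = (\<lambda>i. \<lceil>Inf ((\<lambda>x. cvec C i \<bullet> x) ` S)\<rceil>);
         t = (THE t. intpt t \<and> (\<forall>i\<in>{1..CARD('n)}. cvec C i \<bullet> t = of_int (l i)))
     in ((\<lambda>x. x - t) ` S) \<inter> Kcone C)"

definition cut_index :: "(nat \<Rightarrow> int^'n) \<Rightarrow> real^'n \<Rightarrow> nat" where
  "cut_index C xb = (LEAST k. k \<in> {1..CARD('n)} \<and> cvec C k \<bullet> xb \<notin> \<int>)"

definition cut_coeff :: "(nat \<Rightarrow> int^'n) \<Rightarrow> real^'n \<Rightarrow> nat \<Rightarrow> nat \<Rightarrow> real" where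
  "cut_coeff C xb k i =
     (if i = k then 1
      else if i = k - 1 then of_int \<lceil>cvec C k \<bullet> xb\<rceil>
      else of_int \<lceil>cvec C k \<bullet> xb\<rceil> * (\<Prod>j\<in>{i+1..k-1}. cvec C j \<bullet> xb + 1))"

definition cut_halfspace :: "(nat \<Rightarrow> int^'n) \<Rightarrow> real^'n \<Rightarrow> (real^'n) set" where
  "cut_halfspace C xb =
    (let k = cut_index C xb; d = cut_coeff C xb k in
     {x. (\<Sum>i=1..k. d i * (cvec C i \<bullet> x)) \<ge>
         (\<Sum>i=1..k-1. d i * (cvec C i \<bullet> xb)) + d k * of_int \<lceil>cvec C k \<bullet> xb\<rceil>})"

text \<open>Current set S at the start of iteration m (iteration = steps (2)-(5)).
  Once the algorithm has stopped, the set is kept constant.\<close>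
primrec alg_state :: "(nat \<Rightarrow> int^'n) \<Rightarrow> (real^'n) set \<Rightarrow> nat \<Rightarrow> (real^'n) set" where
  "alg_state C S 0 = init_set C S"
| "alg_state C S (Suc m) =
     (let T = alg_state C S m in
      if T = {} \<or> intpt (lexmin C T) then T else T \<inter> cut_halfspace C (lexmin C T))"

end

theory Submission
  imports Defs
begin

text \<open>
  Validity of the cut: the lex-min point x of the current set lies in K, and every integral y in
  the set is lex-greater than x. If y first exceeds x in c^j with j < k, then
  c^j y \<ge> c^j x + 1, and the coefficients satisfy
  d_j = \<lceil>c^k x\<rceil> + \<Sum>(j<i<k) d_i c^i x, so this single unit pays for the rest of the
  right-hand side, all other terms being nonnegative on K; if j = k, integrality gives
  c^k y \<ge> \<lceil>c^k x\<rceil>. The point x violates the cut because c^k x is fractional.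

  Termination: the lex-min points strictly increase in the lex order and stay in a bounded set.
  By induction on p, their values c^1,...,c^p are eventually constant integers, because c^(p+1)
  is then eventually nondecreasing and jumps to its ceiling whenever it is fractional. Hence all
  c^i x eventually become integral, and then so does x, as c^1,...,c^n is a lattice basis.
\<close>

lemma cvec_inner: "cvec C i \<bullet> z = (\<Sum>j\<in>UNIV. of_int (C i $ j) * z $ j)"
  by (simp add: cvec_def inner_vec_def)

lemma intpt_inner_cvec_Ints: "intpt y \<Longrightarrow> cvec C i \<bullet> y \<in> \<int>"
  unfolding cvec_inner intpt_def by (intro Ints_sum Ints_mult) auto

lemma lattice_basis_coordinate:
  fixes C :: "nat \<Rightarrow> int^'n"
  assumes "lattice_basis C"
  obtains l :: "nat \<Rightarrow> int"
  where "\<And>z::real^'n. z $ j = (\<Sum>i=1..CARD('n). of_int (l i) * (cvec C i \<bullet> z))"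
proof -
  obtain l :: "nat \<Rightarrow> int" where l: "axis j 1 = (\<Sum>i=1..CARD('n). l i *s C i)"
    using assms unfolding lattice_basis_def by blast
  have ax: "axis j (1::real) = (\<Sum>i=1..CARD('n). of_int (l i) *\<^sub>R cvec C i)"
  proof (rule vec_eq_iff[THEN iffD2], intro allI)
    fix j'
    have "axis j (1::real) $ j' = of_int (axis j 1 $ j')"
      by (simp add: axis_def)
    also have "\<dots> = (\<Sum>i=1..CARD('n). of_int (l i) * of_int (C i $ j'))"
      by (subst l) (simp add: sum_component)
    finally show "axis j (1::real) $ j' = (\<Sum>i=1..CARD('n). of_int (l i) *\<^sub>R cvec C i) $ j'"
      by (simp add: sum_component cvec_def)
  qed
  have "z $ j = (\<Sum>i=1..CARD('n). of_int (l i) * (cvec C i \<bullet> z))" for z :: "real^'n"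
    using inner_axis'[of j 1 z] by (simp add: ax inner_sum_left)
  then show thesis by (rule that)
qed

lemma lattice_basis_intpt:
  fixes C :: "nat \<Rightarrow> int^'n"
  assumes "lattice_basis C" and "\<forall>i\<in>{1..CARD('n)}. cvec C i \<bullet> z \<in> \<int>"
  shows "intpt z"
  unfolding intpt_def
proof
  fix j
  obtain l :: "nat \<Rightarrow> int"
    where "\<And>z::real^'n. z $ j = (\<Sum>i=1..CARD('n). of_int (l i) * (cvec C i \<bullet> z))"
    using lattice_basis_coordinate[OF assms(1)] by blast
  then show "z $ j \<in> \<int>"
    using assms(2) by (auto intro!: Ints_sum Ints_mult)
qed

lemma lattice_basis_inner_eqI:
  fixes C :: "nat \<Rightarrow> int^'n"
  assumes "lattice_basis C" and "\<forall>i\<in>{1..CARD('n)}. cvec C i \<bullet> x = cvec C i \<bullet> y"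
  shows "x = y"
proof (rule vec_eq_iff[THEN iffD2], intro allI)
  fix j
  obtain l :: "nat \<Rightarrow> int"
    where "\<And>z::real^'n. z $ j = (\<Sum>i=1..CARD('n). of_int (l i) * (cvec C i \<bullet> z))"
    using lattice_basis_coordinate[OF assms(1)] by blast
  then show "x $ j = y $ j"
    using assms(2) by simp
qed

primrec lex_minimizers :: "(nat \<Rightarrow> int^'n) \<Rightarrow> (real^'n) set \<Rightarrow> nat \<Rightarrow> (real^'n) set" where
  "lex_minimizers C T 0 = T"
| "lex_minimizers C T (Suc p) =
     {x \<in> lex_minimizers C T p. \<forall>y\<in>lex_minimizers C T p. cvec C (Suc p) \<bullet> x \<le> cvec C (Suc p) \<bullet> y}"

lemma lex_minimizers_subset: "lex_minimizers C T p \<subseteq> T"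
  by (induction p) auto

lemma compact_lex_minimizers:
  assumes "compact T" and "T \<noteq> {}"
  shows "compact (lex_minimizers C T p) \<and> lex_minimizers C T p \<noteq> {}"
proof (induction p)
  case 0
  then show ?case using assms by simp
next
  case (Suc p)
  let ?U = "lex_minimizers C T p" and ?c = "cvec C (Suc p)"
  have "continuous_on ?U (\<lambda>x. ?c \<bullet> x)"
    by (intro continuous_intros)
  then obtain y where y: "y \<in> ?U" "\<forall>x\<in>?U. ?c \<bullet> y \<le> ?c \<bullet> x"
    using continuous_attains_inf Suc by blast
  have "lex_minimizers C T (Suc p) = ?U \<inter> (\<Inter>x\<in>?U. {z. ?c \<bullet> z \<le> ?c \<bullet> x})"
    by auto
  moreover have "closed (\<Inter>x\<in>?U. {z. ?c \<bullet> z \<le> ?c \<bullet> x})"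
    by (intro closed_INT ballI closed_halfspace_le)
  ultimately have "compact (lex_minimizers C T (Suc p))"
    using Suc by (simp add: compact_Int_closed)
  moreover have "y \<in> lex_minimizers C T (Suc p)"
    using y by simp
  ultimately show ?case by blast
qed

lemma lex_minimizers_iff:
  assumes "y \<in> lex_minimizers C T p" and "x \<in> T"
  shows "x \<in> lex_minimizers C T p \<longleftrightarrow> (\<forall>i\<in>{1..p}. cvec C i \<bullet> x = cvec C i \<bullet> y)"
  using assms(1)
proof (induction p arbitrary: y)
  case 0
  then show ?case using assms(2) by simp
next
  case (Suc p)
  let ?U = "lex_minimizers C T p" and ?c = "cvec C (Suc p)"
  have y: "y \<in> ?U" "\<forall>z\<in>?U. ?c \<bullet> y \<le> ?c \<bullet> z"
    using Suc.prems by auto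
  have "x \<in> lex_minimizers C T (Suc p) \<longleftrightarrow> x \<in> ?U \<and> ?c \<bullet> x = ?c \<bullet> y"
    using y by (auto intro: order.antisym order.trans)
  also have "\<dots> \<longleftrightarrow> (\<forall>i\<in>{1..Suc p}. cvec C i \<bullet> x = cvec C i \<bullet> y)"
    using Suc.IH[OF y(1)] by (auto simp: atLeastAtMostSuc_conv)
  finally show ?case .
qed

lemma lex_minimizers_lex_first_difference:
  assumes "y \<in> lex_minimizers C T p" and "x \<in> T" and "x \<notin> lex_minimizers C T p"
  shows "\<exists>i\<in>{1..p}. cvec C i \<bullet> y < cvec C i \<bullet> x \<and> (\<forall>j\<in>{1..<i}. cvec C j \<bullet> y = cvec C j \<bullet> x)"
  using assms(1,3)
proof (induction p arbitrary: y)
  case 0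
  then show ?case using assms(2) by simp
next
  case (Suc p)
  let ?U = "lex_minimizers C T p" and ?c = "cvec C (Suc p)"
  have y: "y \<in> ?U" "\<forall>z\<in>?U. ?c \<bullet> y \<le> ?c \<bullet> z"
    using Suc.prems by auto
  show ?case
  proof (cases "x \<in> ?U")
    case True
    then have "?c \<bullet> y < ?c \<bullet> x"
      using y Suc.prems(2) by (auto simp: order.order_iff_strict)
    moreover have "\<forall>j\<in>{1..<Suc p}. cvec C j \<bullet> y = cvec C j \<bullet> x"
      using True lex_minimizers_iff[OF y(1) assms(2)] by auto
    ultimately show ?thesis by auto
  next
    case False
    then show ?thesis
      using Suc.IH[OF y(1)] by auto
  qed
qed

lemma lexless_asym: "lexless C x y \<Longrightarrow> \<not> lexless C y x"
  unfolding lexless_def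
  by (metis atLeastLessThan_iff atLeastAtMost_iff linorder_neqE_nat order.asym)

lemma lexless_imp_inner_le:
  assumes "lexless C x y" and "1 \<le> q" and "\<forall>i\<in>{1..<q}. cvec C i \<bullet> x = cvec C i \<bullet> y"
  shows "cvec C q \<bullet> x \<le> cvec C q \<bullet> y"
proof -
  obtain i where i: "1 \<le> i" "cvec C i \<bullet> x < cvec C i \<bullet> y"
    "\<forall>j\<in>{1..<i}. cvec C j \<bullet> x = cvec C j \<bullet> y"
    using assms(1) unfolding lexless_def by auto
  then show ?thesis
    using assms(2,3) by (cases i q rule: linorder_cases) auto
qed

lemma lexmin_exists:
  fixes C :: "nat \<Rightarrow> int^'n"
  assumes "lattice_basis C" and "compact T" and "T \<noteq> {}"
  shows "\<exists>y\<in>T. \<forall>x\<in>T - {y}. lexless C y x"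
proof -
  obtain y where y: "y \<in> lex_minimizers C T CARD('n)"
    using compact_lex_minimizers[OF assms(2,3)] by blast
  have "lexless C y x" if x: "x \<in> T - {y}" for x
  proof -
    have "x \<notin> lex_minimizers C T CARD('n)"
      using x lex_minimizers_iff[OF y] lattice_basis_inner_eqI[OF assms(1), of x y] by auto
    then show ?thesis
      using x lex_minimizers_lex_first_difference[OF y, of x] unfolding lexless_def by auto
  qed
  then show ?thesis
    using y lex_minimizers_subset by blast
qed

lemma lexmin_eqI:
  assumes "y \<in> T" and "\<forall>x\<in>T - {y}. lexless C y x"
  shows "lexmin C T = y"
  unfolding lexmin_def
proof (rule the_equality)
  show "y \<in> T \<and> (\<forall>x\<in>T - {y}. lexless C y x)"
    using assms by blast
  show "z = y" if "z \<in> T \<and> (\<forall>x\<in>T - {z}. lexless C z x)" for z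
    using that assms lexless_asym by blast
qed

lemma
  assumes "lattice_basis C" and "compact T" and "T \<noteq> {}"
  shows lexmin_in: "lexmin C T \<in> T"
    and lexmin_lexless: "x \<in> T \<Longrightarrow> x \<noteq> lexmin C T \<Longrightarrow> lexless C (lexmin C T) x"
  using lexmin_exists[OF assms] lexmin_eqI by (metis insert_Diff insert_iff)+

lemma cut_index_spec:
  fixes C :: "nat \<Rightarrow> int^'n"
  assumes "lattice_basis C" and "\<not> intpt xb"
  shows "cut_index C xb \<in> {1..CARD('n)}" and "cvec C (cut_index C xb) \<bullet> xb \<notin> \<int>"
    and "\<forall>i\<in>{1..<cut_index C xb}. cvec C i \<bullet> xb \<in> \<int>"
proof -
  have ex: "\<exists>k. k \<in> {1..CARD('n)} \<and> cvec C k \<bullet> xb \<notin> \<int>"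
    using lattice_basis_intpt[OF assms(1), of xb] assms(2) by blast
  show "cut_index C xb \<in> {1..CARD('n)}" and "cvec C (cut_index C xb) \<bullet> xb \<notin> \<int>"
    unfolding cut_index_def using LeastI_ex[OF ex] by auto
  then show "\<forall>i\<in>{1..<cut_index C xb}. cvec C i \<bullet> xb \<in> \<int>"
    unfolding cut_index_def using not_less_Least by fastforce
qed

lemma cut_index_eqI:
  fixes C :: "nat \<Rightarrow> int^'n"
  assumes "q \<in> {1..CARD('n)}" and "cvec C q \<bullet> xb \<notin> \<int>" and "\<forall>i\<in>{1..<q}. cvec C i \<bullet> xb \<in> \<int>"
  shows "cut_index C xb = q"
  unfolding cut_index_def
  using assms by (intro Least_equality) (auto simp: not_less[symmetric])

lemma cut_coeff_below:
  "i < k \<Longrightarrow> cut_coeff C xb k i = of_int \<lceil>cvec C k \<bullet> xb\<rceil> * (\<Prod>l\<in>{i+1..<k}. cvec C l \<bullet> xb + 1)"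
  unfolding cut_coeff_def by (auto simp: atLeastLessThanSuc_atLeastAtMost[symmetric])

lemma cut_halfspace_iff:
  assumes "cut_index C xb = k" and "1 \<le> k"
  shows "x \<in> cut_halfspace C xb \<longleftrightarrow>
    (\<Sum>i\<in>{1..<k}. cut_coeff C xb k i * (cvec C i \<bullet> xb)) + of_int \<lceil>cvec C k \<bullet> xb\<rceil>
      \<le> (\<Sum>i\<in>{1..<k}. cut_coeff C xb k i * (cvec C i \<bullet> x)) + cvec C k \<bullet> x"
proof -
  have "{1..k} = insert k {1..<k}" and "{1..k-1} = {1..<k}" and "cut_coeff C xb k k = 1"
    using assms(2) by (auto simp: cut_coeff_def)
  then show ?thesis
    unfolding cut_halfspace_def Let_def assms(1) by (simp add: add.commute)
qed

lemma prod_plus_one_expand: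
  fixes a :: "nat \<Rightarrow> 'a::comm_ring_1"
  assumes "j \<le> k"
  shows "(\<Prod>l\<in>{j..<k}. a l + 1) = 1 + (\<Sum>i\<in>{j..<k}. a i * (\<Prod>l\<in>{i+1..<k}. a l + 1))"
  using assms
proof (induction j rule: inc_induct)
  case base
  then show ?case by simp
next
  case (step j)
  then show ?case
    by (simp add: prod.atLeast_Suc_lessThan sum.atLeast_Suc_lessThan algebra_simps)
qed

lemma lex_cut_inequality:
  fixes a b :: "nat \<Rightarrow> real" and k j :: nat
  defines "r \<equiv> of_int \<lceil>a k\<rceil>" and "d \<equiv> \<lambda>i. of_int \<lceil>a k\<rceil> * (\<Prod>l\<in>{i+1..<k}. a l + 1)"
  assumes k: "1 \<le> k" "a k \<notin> \<int>" "\<forall>i\<in>{1..<k}. a i \<in> \<int>"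
    and nonneg: "\<forall>i\<in>{1..k}. 0 \<le> a i \<and> 0 \<le> b i" and b_int: "\<forall>i. b i \<in> \<int>"
    and lex: "1 \<le> j" "a j < b j" "\<forall>i\<in>{1..<j}. a i = b i"
  shows "(\<Sum>i\<in>{1..<k}. d i * a i) + r \<le> (\<Sum>i\<in>{1..<k}. d i * b i) + b k"
proof (cases j k rule: linorder_cases)
  case greater
  then show ?thesis
    using k lex(3) b_int by auto
next
  case equal
  have "(\<Sum>i\<in>{1..<k}. d i * a i) = (\<Sum>i\<in>{1..<k}. d i * b i)"
    using lex(3) equal by (intro sum.cong) auto
  moreover obtain m where "b k = of_int m"
    using b_int Ints_cases by blast
  then have "r \<le> b k"
    using lex(2) equal by (simp add: r_def ceiling_le_iff)
  ultimately show ?thesis by simp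
next
  case less
  have "0 \<le> a k"
    using nonneg k(1) by auto
  then have d_nonneg: "0 \<le> d i" for i
    using nonneg by (auto simp: d_def r_def intro!: mult_nonneg_nonneg prod_nonneg)
  have d_j: "d j = (\<Sum>i\<in>{j+1..<k}. d i * a i) + r"
    using prod_plus_one_expand[of "j+1" k a] less
    by (simp add: d_def r_def sum_distrib_left algebra_simps)
  have "a j \<in> \<int>" "b j \<in> \<int>"
    using k(3) b_int lex(1) less by auto
  then have "a j + 1 \<le> b j"
    using lex(2) by (auto elim!: Ints_cases)
  then have "d j * (a j + 1) \<le> d j * b j"
    using d_nonneg by (rule mult_left_mono)
  then have "d j * a j + (\<Sum>i\<in>{j+1..<k}. d i * a i) + r \<le> d j * b j"
    unfolding distrib_left mult_1_right using d_j by linarith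
  moreover have "0 \<le> (\<Sum>i\<in>{j+1..<k}. d i * b i)" "0 \<le> b k"
    using nonneg d_nonneg k(1) by (auto intro!: sum_nonneg mult_nonneg_nonneg)
  moreover have "(\<Sum>i\<in>{1..<j}. d i * a i) = (\<Sum>i\<in>{1..<j}. d i * b i)"
    using lex(3) by (intro sum.cong) auto
  moreover have split: "(\<Sum>i\<in>{1..<k}. f i) = (\<Sum>i\<in>{1..<j}. f i) + f j + (\<Sum>i\<in>{j+1..<k}. f i)"
    for f :: "nat \<Rightarrow> real"
    using sum.atLeastLessThan_concat[of 1 j k f] sum.atLeast_Suc_lessThan[OF less, of f] less lex(1)
    by simp
  ultimately show ?thesis
    using split[of "\<lambda>i. d i * a i"] split[of "\<lambda>i. d i * b i"] by linarith
qed

lemma cut_halfspace_lex_greater_intpt: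
  fixes C :: "nat \<Rightarrow> int^'n"
  assumes "lattice_basis C" and "\<not> intpt xb" and "xb \<in> Kcone C"
    and "y \<in> Kcone C" and "intpt y" and "lexless C xb y"
  shows "y \<in> cut_halfspace C xb"
proof -
  define k where "k = cut_index C xb"
  note k = cut_index_spec[OF assms(1,2), folded k_def]
  obtain j where j: "j \<in> {1..CARD('n)}" "cvec C j \<bullet> xb < cvec C j \<bullet> y"
    "\<forall>i\<in>{1..<j}. cvec C i \<bullet> xb = cvec C i \<bullet> y"
    using assms(6) unfolding lexless_def by blast
  have "(\<Sum>i\<in>{1..<k}. cut_coeff C xb k i * f i) =
        (\<Sum>i\<in>{1..<k}. of_int \<lceil>cvec C k \<bullet> xb\<rceil> * (\<Prod>l\<in>{i+1..<k}. cvec C l \<bullet> xb + 1) * f i)" for f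
    by (intro sum.cong) (auto simp: cut_coeff_below)
  moreover have "\<forall>i\<in>{1..k}. 0 \<le> cvec C i \<bullet> xb \<and> 0 \<le> cvec C i \<bullet> y"
    using assms(3,4) k(1) unfolding Kcone_def by auto
  ultimately show ?thesis
    using lex_cut_inequality[of k "\<lambda>i. cvec C i \<bullet> xb" "\<lambda>i. cvec C i \<bullet> y" j]
      cut_halfspace_iff[OF k_def[symmetric]] k j intpt_inner_cvec_Ints[OF assms(5)]
    by auto
qed

lemma notin_cut_halfspace:
  assumes "lattice_basis C" and "\<not> intpt xb"
  shows "xb \<notin> cut_halfspace C xb"
proof -
  define k where "k = cut_index C xb"
  note k = cut_index_spec[OF assms, folded k_def]
  have "cvec C k \<bullet> xb < of_int \<lceil>cvec C k \<bullet> xb\<rceil>"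
    using k(2) le_of_int_ceiling[of "cvec C k \<bullet> xb"] by (metis Ints_of_int order_less_le)
  then show ?thesis
    using cut_halfspace_iff[OF k_def[symmetric]] k(1) by auto
qed

lemma cut_halfspace_inner_ge_ceiling:
  assumes "cut_index C xb = k" and "1 \<le> k" and "x \<in> cut_halfspace C xb"
    and "\<forall>i\<in>{1..<k}. cvec C i \<bullet> x = cvec C i \<bullet> xb"
  shows "of_int \<lceil>cvec C k \<bullet> xb\<rceil> \<le> cvec C k \<bullet> x"
proof -
  have "(\<Sum>i\<in>{1..<k}. cut_coeff C xb k i * (cvec C i \<bullet> x)) =
        (\<Sum>i\<in>{1..<k}. cut_coeff C xb k i * (cvec C i \<bullet> xb))"
    using assms(4) by (intro sum.cong) auto
  then show ?thesis
    using assms(3) unfolding cut_halfspace_iff[OF assms(1,2)] by linarith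
qed

lemma eventually_const_if_mono_bounded_int:
  fixes g :: "nat \<Rightarrow> int"
  assumes "\<forall>m\<ge>M. g m \<le> g (Suc m)" and "\<forall>m. g m \<le> B"
  shows "\<exists>M'\<ge>M. \<forall>m\<ge>M'. g m = g M'"
  using assms
proof (induction "nat (B - g M)" arbitrary: M rule: less_induct)
  case less
  have g_ge: "g M \<le> g m" if "M \<le> m" for m
    using that
  proof (induction m rule: dec_induct)
    case (step n)
    then show ?case
      using less.prems(1) order_trans by blast
  qed simp
  show ?case
  proof (cases "\<forall>m\<ge>M. g m = g M")
    case True
    then show ?thesis by blast
  next
    case False
    then obtain m where m: "M \<le> m" "g M < g m"
      using g_ge by (metis order_less_le)
    have "nat (B - g m) < nat (B - g M)"
      using m(2) less.prems(2)[rule_format, of m] by (simp add: nat_less_eq_zless)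
    moreover have "\<forall>m'\<ge>m. g m' \<le> g (Suc m')"
      using less.prems(1) m(1) by auto
    ultimately have "\<exists>M'\<ge>m. \<forall>m'\<ge>M'. g m' = g M'"
      by (rule less.hyps[OF _ _ less.prems(2)])
    then show ?thesis
      using m(1) order_trans by blast
  qed
qed

lemma eventually_const_Ints_if_jumps_to_ceiling:
  fixes a :: "nat \<Rightarrow> real"
  assumes "eventually (\<lambda>m. a m \<le> a (Suc m)) sequentially"
    and "eventually (\<lambda>m. a m \<notin> \<int> \<longrightarrow> of_int \<lceil>a m\<rceil> \<le> a (Suc m)) sequentially"
    and "\<And>m. a m \<le> B"
  shows "\<exists>v\<in>\<int>. eventually (\<lambda>m. a m = v) sequentially"
proof -
  obtain M where M: "\<forall>m\<ge>M. a m \<le> a (Suc m) \<and> (a m \<notin> \<int> \<longrightarrow> of_int \<lceil>a m\<rceil> \<le> a (Suc m))"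
    using eventually_conj[OF assms(1,2)] unfolding eventually_sequentially by blast
  \<comment> \<open>g grows strictly at every non-integral value of a, where the ceiling is the floor plus one\<close>
  define g where "g m = \<lfloor>a m\<rfloor> + \<lceil>a m\<rceil>" for m
  have "\<forall>m\<ge>M. g m \<le> g (Suc m)"
    using M by (auto simp: g_def intro: add_mono floor_mono ceiling_mono)
  moreover have "\<forall>m. g m \<le> 2 * \<lceil>B\<rceil>"
  proof
    fix m
    have "\<lceil>a m\<rceil> \<le> \<lceil>B\<rceil>"
      using assms(3) by (rule ceiling_mono)
    then show "g m \<le> 2 * \<lceil>B\<rceil>"
      using floor_le_ceiling[of "a m"] unfolding g_def by linarith
  qed
  ultimately obtain M' where M': "M' \<ge> M" "\<forall>m\<ge>M'. g m = g M'"
    using eventually_const_if_mono_bounded_int by blast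
  have a_int: "a m \<in> \<int>" if "m \<ge> M'" for m
  proof (rule ccontr)
    assume non_int: "a m \<notin> \<int>"
    then have "a m \<noteq> of_int \<lfloor>a m\<rfloor>"
      using Ints_of_int by metis
    moreover have "of_int \<lceil>a m\<rceil> \<le> a (Suc m)"
      using M M'(1) that non_int by auto
    ultimately have "\<lceil>a m\<rceil> = \<lfloor>a m\<rfloor> + 1" and "\<lceil>a m\<rceil> \<le> \<lfloor>a (Suc m)\<rfloor>"
      by (auto simp: ceiling_altdef le_floor_iff)
    then have "g m < g (Suc m)"
      using floor_le_ceiling[of "a (Suc m)"] unfolding g_def by linarith
    with M'(2) that show False
      by (metis le_SucI order_less_irrefl)
  qed
  have "a m = a M'" if m: "m \<ge> M'" for m
  proof -
    obtain z z' where "a m = of_int z" "a M' = of_int z'"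
      using a_int[OF m] a_int[of M'] by (auto elim!: Ints_cases)
    then show ?thesis
      using M'(2)[rule_format, OF m] unfolding g_def by simp
  qed
  then show ?thesis
    using a_int[of M'] unfolding eventually_sequentially by blast
qed

lemma no_infinite_lex_cut_sequence:
  fixes C :: "nat \<Rightarrow> int^'n" and x :: "nat \<Rightarrow> real^'n"
  assumes lb: "lattice_basis C" and non_int: "\<And>m. \<not> intpt (x m)"
    and lex: "\<And>m. lexless C (x m) (x (Suc m))"
    and cut: "\<And>m. x (Suc m) \<in> cut_halfspace C (x m)"
    and bound: "\<And>m i. cvec C i \<bullet> x m \<le> B i"
  shows False
proof -
  \<comment> \<open>once c^1,...,c^p are eventually constant, c^(p+1) is eventually nondecreasing by the lex
    order and jumps to its ceiling whenever it is fractional, because the cut index is then p+1\<close>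
  have "\<exists>v. (\<forall>i\<in>{1..p}. v i \<in> \<int>) \<and>
            eventually (\<lambda>m. \<forall>i\<in>{1..p}. cvec C i \<bullet> x m = v i) sequentially"
    if "p \<le> CARD('n)" for p
    using that
  proof (induction p)
    case 0
    then show ?case by simp
  next
    case (Suc p)
    then obtain v where v: "\<forall>i\<in>{1..p}. v i \<in> \<int>"
      and ev: "eventually (\<lambda>m. \<forall>i\<in>{1..p}. cvec C i \<bullet> x m = v i) sequentially"
      by auto
    let ?a = "\<lambda>m. cvec C (Suc p) \<bullet> x m"
    have "eventually (\<lambda>m. \<forall>i\<in>{1..p}. cvec C i \<bullet> x (Suc m) = v i) sequentially"
      using ev eventually_sequentially_Suc[of "\<lambda>m. \<forall>i\<in>{1..p}. cvec C i \<bullet> x m = v i"] by simp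
    with ev have "eventually (\<lambda>m. \<forall>i\<in>{1..<Suc p}.
        cvec C i \<bullet> x (Suc m) = cvec C i \<bullet> x m \<and> cvec C i \<bullet> x m \<in> \<int>) sequentially"
      by eventually_elim (use v in auto)
    then have "eventually (\<lambda>m. ?a m \<le> ?a (Suc m) \<and>
        (?a m \<notin> \<int> \<longrightarrow> of_int \<lceil>?a m\<rceil> \<le> ?a (Suc m))) sequentially"
    proof eventually_elim
      case (elim m)
      have "?a m \<le> ?a (Suc m)"
        using lexless_imp_inner_le[OF lex, of "Suc p" m] elim by simp
      moreover have "of_int \<lceil>?a m\<rceil> \<le> ?a (Suc m)" if "?a m \<notin> \<int>"
      proof -
        have "cut_index C (x m) = Suc p"
          using Suc.prems that elim by (intro cut_index_eqI) auto
        from cut_halfspace_inner_ge_ceiling[OF this _ cut] show ?thesis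
          using elim by simp
      qed
      ultimately show ?case by blast
    qed
    then obtain w where w: "w \<in> \<int>" "eventually (\<lambda>m. ?a m = w) sequentially"
      using eventually_const_Ints_if_jumps_to_ceiling[of ?a "B (Suc p)"] bound
      unfolding eventually_conj_iff by blast
    have "eventually (\<lambda>m. \<forall>i\<in>{1..Suc p}. cvec C i \<bullet> x m = (v(Suc p := w)) i) sequentially"
      using ev w(2) by eventually_elim (auto simp: atLeastAtMostSuc_conv)
    moreover have "\<forall>i\<in>{1..Suc p}. (v(Suc p := w)) i \<in> \<int>"
      using v w(1) by (auto simp: atLeastAtMostSuc_conv)
    ultimately show ?case
      by blast
  qed
  then obtain v where "\<forall>i\<in>{1..CARD('n)}. v i \<in> \<int>"
    and "eventually (\<lambda>m. \<forall>i\<in>{1..CARD('n)}. cvec C i \<bullet> x m = v i) sequentially"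
    by blast
  then have "eventually (\<lambda>m. intpt (x m)) sequentially"
    by (auto elim!: eventually_mono intro: lattice_basis_intpt[OF lb])
  then show False
    using non_int by (simp add: eventually_sequentially)
qed

lemma closed_Kcone:
  fixes C :: "nat \<Rightarrow> int^'n"
  shows "closed (Kcone C)"
proof -
  have "Kcone C = (\<Inter>i\<in>{1..CARD('n)}. {x. cvec C i \<bullet> x \<ge> 0})"
    unfolding Kcone_def by auto
  then show ?thesis
    by (auto intro!: closed_INT closed_halfspace_ge)
qed

lemma closed_cut_halfspace: "closed (cut_halfspace C xb)"
  unfolding cut_halfspace_def Let_def
  by (intro closed_Collect_le continuous_intros)

lemma compact_init_set: "compact S \<Longrightarrow> compact (init_set C S)"
  unfolding init_set_def Let_def
  by (intro compact_Int_closed closed_Kcone compact_translation_subtract)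

lemma alg_state_Suc_subset: "alg_state C S (Suc m) \<subseteq> alg_state C S m"
  by (auto simp: Let_def)

lemma alg_state_subset_init_set: "alg_state C S m \<subseteq> init_set C S"
  using lift_Suc_antimono_le[of "alg_state C S", OF alg_state_Suc_subset, of 0 m] by simp

lemma alg_state_subset_Kcone: "alg_state C S m \<subseteq> Kcone C"
  using alg_state_subset_init_set unfolding init_set_def Let_def by blast

lemma compact_alg_state: "compact S \<Longrightarrow> compact (alg_state C S m)"
  by (induction m) (auto simp: Let_def compact_init_set intro: compact_Int_closed closed_cut_halfspace)

lemma alg_state_terminates:
  fixes C :: "nat \<Rightarrow> int^'n"
  assumes lb: "lattice_basis C" and "compact S"
  shows "\<exists>m. alg_state C S m = {} \<or> intpt (lexmin C (alg_state C S m))"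
proof (rule ccontr)
  assume "\<not> ?thesis"
  then have running: "alg_state C S m \<noteq> {}" "\<not> intpt (lexmin C (alg_state C S m))" for m
    by auto
  define x where "x m = lexmin C (alg_state C S m)" for m
  have x_in: "x m \<in> alg_state C S m" for m
    unfolding x_def using lexmin_in[OF lb compact_alg_state[OF assms(2)] running(1)] .
  have step: "alg_state C S (Suc m) = alg_state C S m \<inter> cut_halfspace C (x m)" for m
    using running[of m] by (simp add: Let_def x_def)
  have cut: "x (Suc m) \<in> cut_halfspace C (x m)" for m
    using x_in[of "Suc m"] step by blast
  have lex: "lexless C (x m) (x (Suc m))" for m
  proof -
    have "x (Suc m) \<in> alg_state C S m"
      using x_in[of "Suc m"] step by blast
    moreover have "x (Suc m) \<noteq> x m"
      using cut[of m] notin_cut_halfspace[OF lb running(2)] unfolding x_def by metis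
    ultimately show ?thesis
      using lexmin_lexless[OF lb compact_alg_state[OF assms(2)] running(1)] unfolding x_def
      by blast
  qed
  obtain R where R: "\<forall>y\<in>init_set C S. norm y \<le> R"
    using compact_imp_bounded[OF compact_init_set[OF assms(2)]] unfolding bounded_iff by blast
  have bound: "cvec C i \<bullet> x m \<le> norm (cvec C i) * R" for i m
  proof -
    have "cvec C i \<bullet> x m \<le> norm (cvec C i) * norm (x m)"
      by (rule norm_cauchy_schwarz)
    also have "\<dots> \<le> norm (cvec C i) * R"
      using R x_in[of m] alg_state_subset_init_set[of C S m] by (intro mult_left_mono) auto
    finally show ?thesis .
  qed
  have non_int: "\<not> intpt (x m)" for m
    using running(2) unfolding x_def .
  show False
    using lb non_int lex cut bound by (rule no_infinite_lex_cut_sequence)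
qed

theorem proposition2:
  fixes C :: "nat \<Rightarrow> int^'n" and S :: "(real^'n) set" and Fam :: "(real^'n) set set"
  assumes "\<forall>T\<in>Fam. compact T"
    and "\<forall>T\<in>Fam. \<forall>a b. a \<noteq> 0 \<longrightarrow> T \<inter> {x. a \<bullet> x \<ge> b} \<in> Fam"
    and "S \<in> Fam" and "S \<noteq> {}"
    and "C 1 \<noteq> 0" and "Gcd (range (\<lambda>j. C 1 $ j)) = 1"
    and "lattice_basis C"
  shows "(\<forall>m. alg_state C S m \<noteq> {} \<and> \<not> intpt (lexmin C (alg_state C S m)) \<longrightarrow>
            (\<forall>y\<in>alg_state C S m. intpt y \<longrightarrow>
                y \<in> cut_halfspace C (lexmin C (alg_state C S m))) \<and>
            lexmin C (alg_state C S m) \<notin> cut_halfspace C (lexmin C (alg_state C S m)))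
       \<and> (\<exists>m. alg_state C S m = {} \<or> intpt (lexmin C (alg_state C S m)))"
proof -
  have lb: "lattice_basis C" and S: "compact S"
    using assms(1,3,7) by auto
  show ?thesis
  proof (intro conjI allI impI ballI)
    fix m y
    assume running: "alg_state C S m \<noteq> {} \<and> \<not> intpt (lexmin C (alg_state C S m))"
      and y: "y \<in> alg_state C S m" "intpt y"
    let ?T = "alg_state C S m"
    have "lexmin C ?T \<in> Kcone C" "y \<in> Kcone C"
      using lexmin_in[OF lb compact_alg_state[OF S]] running y(1) alg_state_subset_Kcone by blast+
    moreover have "lexless C (lexmin C ?T) y"
      using lexmin_lexless[OF lb compact_alg_state[OF S]] running y by metis
    ultimately show "y \<in> cut_halfspace C (lexmin C ?T)"
      using cut_halfspace_lex_greater_intpt[OF lb] running y(2) by blast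
  next
    fix m
    assume "alg_state C S m \<noteq> {} \<and> \<not> intpt (lexmin C (alg_state C S m))"
    then show "lexmin C (alg_state C S m) \<notin> cut_halfspace C (lexmin C (alg_state C S m))"
      using notin_cut_halfspace[OF lb] by blast
  next
    show "\<exists>m. alg_state C S m = {} \<or> intpt (lexmin C (alg_state C S m))"
      using alg_state_terminates[OF lb S] .
  qed
qed

end
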